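(* There is no countable right-ordered group $U$ such that every finitely generated totally ordered abelian group admits an order-embedding into $U$. Consequently there is no countable right-ordered group into which every finitely generated right-ordered group order-embeds.
   Context: A right-ordered group is a group with a total order $\le$ such that $x\le y$ implies $xz\le yz$ for all $x,y,z$. A totally ordered group additionally satisfies $x\le y\Rightarrow zx\le zy$. An order-embedding is an injective group homomorphism that preserves the order. *)

theory Defs
  imports "HOL-Algebra.Algebra"
begin

definition total_order_on :: "'a set \<Rightarrow> ('a \<Rightarrow> 'a \<Rightarrow> bool) \<Rightarrow> bool" where
  "total_order_on A R \<longleftrightarrow>
     (\<forall>x\<in>A. R x x) \<and>
     (\<forall>x\<in>A. \<forall>y\<in>A. R x y \<and> R y x \<longrightarrow> x = y) \<and>
     (\<forall>x\<in>A. \<forall>y\<in>A. \<forall>z\<in>A. R x y \<and> R y z \<longrightarrow> R x z) \<and>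
     (\<forall>x\<in>A. \<forall>y\<in>A. R x y \<or> R y x)"

definition right_ordered_group :: "('a, 'b) monoid_scheme \<Rightarrow> ('a \<Rightarrow> 'a \<Rightarrow> bool) \<Rightarrow> bool" where
  "right_ordered_group G R \<longleftrightarrow> group G \<and> total_order_on (carrier G) R \<and>
     (\<forall>x\<in>carrier G. \<forall>y\<in>carrier G. \<forall>z\<in>carrier G.
        R x y \<longrightarrow> R (x \<otimes>\<^bsub>G\<^esub> z) (y \<otimes>\<^bsub>G\<^esub> z))"

definition totally_ordered_group :: "('a, 'b) monoid_scheme \<Rightarrow> ('a \<Rightarrow> 'a \<Rightarrow> bool) \<Rightarrow> bool" where
  "totally_ordered_group G R \<longleftrightarrow> right_ordered_group G R \<and>
     (\<forall>x\<in>carrier G. \<forall>y\<in>carrier G. \<forall>z\<in>carrier G.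
        R x y \<longrightarrow> R (z \<otimes>\<^bsub>G\<^esub> x) (z \<otimes>\<^bsub>G\<^esub> y))"

definition finitely_generated_group :: "('a, 'b) monoid_scheme \<Rightarrow> bool" where
  "finitely_generated_group G \<longleftrightarrow>
     (\<exists>S. finite S \<and> S \<subseteq> carrier G \<and> generate G S = carrier G)"

definition order_embedding ::
  "('a, 'b) monoid_scheme \<Rightarrow> ('a \<Rightarrow> 'a \<Rightarrow> bool) \<Rightarrow> ('c, 'd) monoid_scheme \<Rightarrow> ('c \<Rightarrow> 'c \<Rightarrow> bool)
     \<Rightarrow> ('a \<Rightarrow> 'c) \<Rightarrow> bool" where
  "order_embedding G RG H RH f \<longleftrightarrow>
     f \<in> mon G H \<and> (\<forall>x\<in>carrier G. \<forall>y\<in>carrier G. RG x y \<longrightarrow> RH (f x) (f y))"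

definition order_embeds ::
  "('a, 'b) monoid_scheme \<Rightarrow> ('a \<Rightarrow> 'a \<Rightarrow> bool) \<Rightarrow> ('c, 'd) monoid_scheme \<Rightarrow> ('c \<Rightarrow> 'c \<Rightarrow> bool) \<Rightarrow> bool" where
  "order_embeds G RG H RH \<longleftrightarrow> (\<exists>f. order_embedding G RG H RH f)"

end

theory Submission
  imports Defs
    "HOL-Library.Nat_Bijection"
    "HOL-Library.Product_Plus"
    "HOL-Analysis.Finite_Cartesian_Product"
    "HOL-Analysis.Continuum_Not_Denumerable"
begin

text \<open>
  An order-embedding of a finitely generated group \<open>G\<close> into \<open>U\<close> is a homomorphism, so it is
  determined by its values on the finitely many generators, and it determines the order of \<open>G\<close>
  as the pull-back of the order of \<open>U\<close>. Hence a countable right-ordered group \<open>U\<close> can receive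
  only countably many orders on \<open>G\<close>. But \<open>\<int>\<^sup>2\<close> carries uncountably many bi-invariant orders:
  one for every real \<open>\<alpha>\<close>, comparing \<open>(a, b)\<close> through \<open>a + \<alpha> b\<close>, and distinct \<open>\<alpha>\<close> are separated
  by a rational between them.
\<close>

lemma (in group) hom_eq_on_generate:
  assumes K: "group K" and f: "f \<in> hom G K" and g: "g \<in> hom G K"
    and S: "S \<subseteq> carrier G" "\<forall>s\<in>S. f s = g s" and x: "x \<in> generate G S"
  shows "f x = g x"
proof -
  interpret f: group_hom G K f using K f by (simp add: group_hom_def group_hom_axioms_def is_group)
  interpret g: group_hom G K g using K g by (simp add: group_hom_def group_hom_axioms_def is_group)
  from x show ?thesis
  proof induct
    case (inv h)
    then have "h \<in> carrier G" using S by blast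
    with inv S show ?case by simp
  next
    case (eng h1 h2)
    then have "h1 \<in> carrier G" "h2 \<in> carrier G"
      using generate_in_carrier[OF S(1)] by blast+
    with eng show ?case by simp
  qed (use S in auto)
qed

lemma total_order_on_pullback:
  assumes R: "total_order_on B R" and f: "inj_on f A" "f ` A \<subseteq> B"
  shows "total_order_on A (\<lambda>x y. R (f x) (f y))"
proof -
  have "f x \<in> B" if "x \<in> A" for x
    using f(2) that by blast
  with R f(1) show ?thesis
    unfolding total_order_on_def inj_on_def by meson
qed

definition restrict_rel :: "'a set \<Rightarrow> ('a \<Rightarrow> 'a \<Rightarrow> bool) \<Rightarrow> 'a \<Rightarrow> 'a \<Rightarrow> bool" where
  "restrict_rel A R x y \<longleftrightarrow> x \<in> A \<and> y \<in> A \<and> R x y"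

lemma restrict_rel_UNIV [simp]: "restrict_rel UNIV R = R"
  by (simp add: restrict_rel_def fun_eq_iff)

lemma order_embedding_reflects:
  assumes RH: "total_order_on (carrier H) RH" and RU: "total_order_on (carrier U) RU"
    and f: "order_embedding H RH U RU f" and x: "x \<in> carrier H" and y: "y \<in> carrier H"
  shows "RU (f x) (f y) \<longleftrightarrow> RH x y"
proof
  assume fxy: "RU (f x) (f y)"
  show "RH x y"
  proof (rule ccontr)
    assume "\<not> RH x y"
    with RH x y have "RH y x" "x \<noteq> y"
      unfolding total_order_on_def by blast+
    with f x y have "RU (f y) (f x)" "f x \<noteq> f y"
      by (auto simp: order_embedding_def mon_def inj_on_def)
    moreover have "f x \<in> carrier U" "f y \<in> carrier U"
      using f x y by (auto simp: order_embedding_def mon_def hom_def)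
    ultimately show False
      using fxy RU unfolding total_order_on_def by blast
  qed
qed (use f x y in \<open>simp add: order_embedding_def\<close>)

lemma restrict_rel_order_embedding:
  assumes "total_order_on (carrier H) RH" "total_order_on (carrier U) RU"
    and "order_embedding H RH U RU f"
  shows "restrict_rel (carrier H) RH = restrict_rel (carrier H) (\<lambda>x y. RU (f x) (f y))"
  using order_embedding_reflects[OF assms] by (auto simp: restrict_rel_def fun_eq_iff)

lemma countable_embeddable_orders:
  assumes G: "group G" and S: "finite S" "S \<subseteq> carrier G" "generate G S = carrier G"
    and U: "group U" "total_order_on (carrier U) RU" "countable (carrier U)"
  shows "countable (restrict_rel (carrier G) `
           {R. total_order_on (carrier G) R \<and> order_embeds G R U RU})"
    (is "countable ?E")
proof -
  let ?pullback = "\<lambda>f. restrict_rel (carrier G) (\<lambda>x y. RU (f x) (f y))"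
  have "\<forall>r\<in>?E. \<exists>f. f \<in> hom G U \<and> r = ?pullback f"
  proof
    fix r assume "r \<in> ?E"
    then obtain R f where "r = restrict_rel (carrier G) R" "total_order_on (carrier G) R"
      and f: "order_embedding G R U RU f"
      by (auto simp: order_embeds_def)
    with restrict_rel_order_embedding[OF _ U(2) f] show "\<exists>f. f \<in> hom G U \<and> r = ?pullback f"
      using f by (auto simp: order_embedding_def mon_def)
  qed
  then have "\<exists>F. \<forall>r\<in>?E. F r \<in> hom G U \<and> r = ?pullback (F r)"
    by (rule bchoice)
  then obtain F where F: "\<And>r. r \<in> ?E \<Longrightarrow> F r \<in> hom G U \<and> r = ?pullback (F r)"
    by blast
  have inj: "inj_on (\<lambda>r. restrict (F r) S) ?E"
  proof (rule inj_onI)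
    fix r r' assume r: "r \<in> ?E" and r': "r' \<in> ?E"
      and "restrict (F r) S = restrict (F r') S"
    then have "\<forall>s\<in>S. F r s = F r' s"
      by (metis restrict_apply')
    then have "F r x = F r' x" if "x \<in> carrier G" for x
      using group.hom_eq_on_generate[OF G U(1)] F[OF r] F[OF r'] S that by blast
    then have "?pullback (F r) = ?pullback (F r')"
      by (auto simp: restrict_rel_def fun_eq_iff)
    with F[OF r] F[OF r'] show "r = r'" by simp
  qed
  have "countable ((\<lambda>r. restrict (F r) S) ` ?E)"
  proof (rule countable_subset)
    show "(\<lambda>r. restrict (F r) S) ` ?E \<subseteq> S \<rightarrow>\<^sub>E carrier U"
      using F S(2) by (auto simp: restrict_PiE_iff hom_def Pi_iff)
    show "countable (S \<rightarrow>\<^sub>E carrier U)"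
      using S(1) U(3) by (rule countable_PiE)
  qed
  from countable_image_inj_on[OF this inj] show ?thesis .
qed

definition int_pair_encode :: "int \<times> int \<Rightarrow> nat" where
  "int_pair_encode p = prod_encode (int_encode (fst p), int_encode (snd p))"

definition int_pair_decode :: "nat \<Rightarrow> int \<times> int" where
  "int_pair_decode n = (int_decode (fst (prod_decode n)), int_decode (snd (prod_decode n)))"

lemma int_pair_decode_encode [simp]: "int_pair_decode (int_pair_encode p) = p"
  by (simp add: int_pair_encode_def int_pair_decode_def)

lemma int_pair_encode_decode [simp]: "int_pair_encode (int_pair_decode n) = n"
  by (simp add: int_pair_encode_def int_pair_decode_def)

lemma inj_int_pair_decode: "inj int_pair_decode"
  by (rule inj_on_inverseI[where g = int_pair_encode]) simp

text \<open>The group \<open>\<int>\<^sup>2\<close>, transported to \<open>nat\<close> along the bijection \<^const>\<open>int_pair_encode\<close>.\<close>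

definition ZxZ :: "nat monoid" where
  "ZxZ = \<lparr>carrier = UNIV,
          monoid.mult = (\<lambda>m n. int_pair_encode (int_pair_decode m + int_pair_decode n)),
          monoid.one = int_pair_encode 0\<rparr>"

lemma ZxZ_simps [simp]:
  "carrier ZxZ = UNIV"
  "m \<otimes>\<^bsub>ZxZ\<^esub> n = int_pair_encode (int_pair_decode m + int_pair_decode n)"
  "\<one>\<^bsub>ZxZ\<^esub> = int_pair_encode 0"
  by (simp_all add: ZxZ_def)

lemma comm_group_ZxZ: "comm_group ZxZ"
proof (rule comm_groupI)
  fix n
  show "\<exists>m\<in>carrier ZxZ. m \<otimes>\<^bsub>ZxZ\<^esub> n = \<one>\<^bsub>ZxZ\<^esub>"
    by (rule bexI[of _ "int_pair_encode (- int_pair_decode n)"]) simp_all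
qed (simp_all add: algebra_simps)

lemma group_ZxZ: "group ZxZ"
  using comm_group_ZxZ by (rule comm_group.axioms(2))

lemma inv_ZxZ: "inv\<^bsub>ZxZ\<^esub> (int_pair_encode p) = int_pair_encode (- p)"
  by (rule group.inv_equality[OF group_ZxZ]) simp_all

lemma generate_ZxZ: "generate ZxZ {int_pair_encode (1, 0), int_pair_encode (0, 1)} = carrier ZxZ"
proof -
  let ?gen = "generate ZxZ {int_pair_encode (1, 0), int_pair_encode (0, 1)}"
  have gen: "int_pair_encode q \<in> ?gen" "int_pair_encode (- q) \<in> ?gen"
    if "q \<in> {(1, 0), (0, 1)}" for q
    using that generate.incl[of "int_pair_encode q" _ ZxZ]
      generate.inv[of "int_pair_encode q" _ ZxZ] inv_ZxZ[of q]
    by auto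
  have step: "int_pair_encode (p + q) \<in> ?gen"
    if "int_pair_encode p \<in> ?gen" "int_pair_encode q \<in> ?gen" for p q
    using generate.eng[OF that] by simp
  have vertical: "int_pair_encode (0, b) \<in> ?gen" for b
  proof (induct b rule: int_induct[where k = 0])
    case base
    show ?case using generate.one[of ZxZ] by (simp add: zero_prod_def)
  next
    case (step1 i)
    show ?case using step[OF step1(2) gen(1)[of "(0, 1)"]] by simp
  next
    case (step2 i)
    show ?case using step[OF step2(2) gen(2)[of "(0, 1)"]] by simp
  qed
  have "int_pair_encode (a, b) \<in> ?gen" for a b
  proof (induct a rule: int_induct[where k = 0])
    case base
    show ?case using vertical by simp
  next
    case (step1 i)
    show ?case using step[OF step1(2) gen(1)[of "(1, 0)"]] by simp
  next
    case (step2 i)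
    show ?case using step[OF step2(2) gen(2)[of "(1, 0)"]] by simp
  qed
  then have "n \<in> ?gen" for n
    by (metis int_pair_encode_decode prod.collapse)
  then show ?thesis
    unfolding ZxZ_simps by (rule UNIV_eq_I[symmetric])
qed

lemma finitely_generated_ZxZ: "finitely_generated_group ZxZ"
  unfolding finitely_generated_group_def
  by (rule exI[of _ "{int_pair_encode (1, 0), int_pair_encode (0, 1)}"]) (simp add: generate_ZxZ)

definition slope_weight :: "real \<Rightarrow> int \<times> int \<Rightarrow> real" where
  "slope_weight \<alpha> p = of_int (fst p) + \<alpha> * of_int (snd p)"

text \<open>Ties, which occur only for rational \<open>\<alpha>\<close>, are broken by the second coordinate.\<close>

definition slope_le :: "real \<Rightarrow> int \<times> int \<Rightarrow> int \<times> int \<Rightarrow> bool" where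
  "slope_le \<alpha> p q \<longleftrightarrow>
     slope_weight \<alpha> p < slope_weight \<alpha> q \<or>
     slope_weight \<alpha> p = slope_weight \<alpha> q \<and> snd p \<le> snd q"

lemma slope_weight_add: "slope_weight \<alpha> (p + q) = slope_weight \<alpha> p + slope_weight \<alpha> q"
  by (simp add: slope_weight_def algebra_simps)

lemma slope_le_add_right: "slope_le \<alpha> (p + r) (q + r) \<longleftrightarrow> slope_le \<alpha> p q"
  by (auto simp: slope_le_def slope_weight_add)

lemma slope_le_add_left: "slope_le \<alpha> (r + p) (r + q) \<longleftrightarrow> slope_le \<alpha> p q"
  by (auto simp: slope_le_def slope_weight_add)

lemma slope_le_antisym:
  assumes "slope_le \<alpha> p q" "slope_le \<alpha> q p"
  shows "p = q"
proof -
  from assms have "slope_weight \<alpha> p = slope_weight \<alpha> q" "snd p = snd q"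
    by (auto simp: slope_le_def)
  then show ?thesis
    by (simp add: slope_weight_def prod_eq_iff)
qed

lemma slope_le_trans: "slope_le \<alpha> p q \<Longrightarrow> slope_le \<alpha> q r \<Longrightarrow> slope_le \<alpha> p r"
  unfolding slope_le_def by auto

lemma slope_le_linear: "slope_le \<alpha> p q \<or> slope_le \<alpha> q p"
  unfolding slope_le_def by auto

lemma total_order_on_slope_le: "total_order_on UNIV (slope_le \<alpha>)"
  unfolding total_order_on_def
  using slope_le_antisym slope_le_trans slope_le_linear by blast

lemma slope_le_separates:
  assumes "\<alpha> < \<beta>"
  shows "\<exists>p. slope_le \<alpha> p 0 \<and> \<not> slope_le \<beta> p 0"
proof -
  obtain r where r: "r \<in> \<rat>" "\<alpha> < r" "r < \<beta>"
    using Rats_dense_in_real[OF assms] by blast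
  then obtain a b :: int where b: "b > 0" and "r = of_int a / of_int b"
    by (meson Rats_cases')
  then have "slope_weight \<gamma> (- a, b) = of_int b * (\<gamma> - r)" for \<gamma>
    by (simp add: slope_weight_def field_simps)
  with b r have "slope_weight \<alpha> (- a, b) < 0" "slope_weight \<beta> (- a, b) > 0"
    by (simp_all add: mult_pos_neg)
  then have "slope_le \<alpha> (- a, b) 0" "\<not> slope_le \<beta> (- a, b) 0"
    by (auto simp: slope_le_def slope_weight_def)
  then show ?thesis by blast
qed

definition slope_order :: "real \<Rightarrow> nat \<Rightarrow> nat \<Rightarrow> bool" where
  "slope_order \<alpha> m n \<longleftrightarrow> slope_le \<alpha> (int_pair_decode m) (int_pair_decode n)"

lemma total_order_on_slope_order: "total_order_on (carrier ZxZ) (slope_order \<alpha>)"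
  using total_order_on_pullback[OF total_order_on_slope_le inj_int_pair_decode]
  by (simp add: slope_order_def [abs_def])

lemma totally_ordered_group_slope_order: "totally_ordered_group ZxZ (slope_order \<alpha>)"
  unfolding totally_ordered_group_def right_ordered_group_def
  using group_ZxZ total_order_on_slope_order
  by (simp add: slope_order_def slope_le_add_left slope_le_add_right)

lemma inj_slope_order: "inj slope_order"
proof (rule linorder_injI)
  fix \<alpha> \<beta> :: real
  assume "\<alpha> < \<beta>"
  then obtain p where "slope_le \<alpha> p 0" "\<not> slope_le \<beta> p 0"
    using slope_le_separates by blast
  then have "slope_order \<alpha> (int_pair_encode p) (int_pair_encode 0)"
    "\<not> slope_order \<beta> (int_pair_encode p) (int_pair_encode 0)"
    by (simp_all add: slope_order_def)
  then show "slope_order \<alpha> \<noteq> slope_order \<beta>"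
    by (auto dest: fun_cong)
qed

lemma countable_right_ordered_group_omits_slope_order:
  assumes U: "right_ordered_group U RU" "countable (carrier U)"
  shows "\<exists>\<alpha>. \<not> order_embeds ZxZ (slope_order \<alpha>) U RU"
proof (rule ccontr)
  let ?embeddable = "restrict_rel (carrier ZxZ) `
        {R. total_order_on (carrier ZxZ) R \<and> order_embeds ZxZ R U RU}"
  assume "\<nexists>\<alpha>. \<not> order_embeds ZxZ (slope_order \<alpha>) U RU"
  then have "range slope_order \<subseteq> ?embeddable"
    using total_order_on_slope_order by (auto intro!: image_eqI)
  moreover have "countable ?embeddable"
    using U unfolding right_ordered_group_def
    by (intro countable_embeddable_orders[OF group_ZxZ _ _ generate_ZxZ]) auto
  ultimately have "countable (range slope_order)"
    by (rule countable_subset)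
  then have "countable (UNIV :: real set)"
    using inj_slope_order by (rule countable_image_inj_on)
  with uncountable_UNIV_real show False
    by contradiction
qed

theorem mainTheorem2:
  shows "(\<not> (\<exists>(U :: 'u monoid) RU.
              right_ordered_group U RU \<and> countable (carrier U) \<and>
              (\<forall>(H :: nat monoid) RH.
                 totally_ordered_group H RH \<and> comm_group H \<and> finitely_generated_group H
                 \<longrightarrow> order_embeds H RH U RU)))
       \<and>
         (\<not> (\<exists>(U :: 'u monoid) RU.
              right_ordered_group U RU \<and> countable (carrier U) \<and>
              (\<forall>(H :: nat monoid) RH.
                 right_ordered_group H RH \<and> finitely_generated_group H
                 \<longrightarrow> order_embeds H RH U RU)))"
proof -
  have "\<not> (\<forall>(H :: nat monoid) RH.
           totally_ordered_group H RH \<and> comm_group H \<and> finitely_generated_group H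
           \<longrightarrow> order_embeds H RH U RU)"
    if U: "right_ordered_group U RU" "countable (carrier U)" for U :: "'u monoid" and RU
  proof -
    obtain \<alpha> where "\<not> order_embeds ZxZ (slope_order \<alpha>) U RU"
      using countable_right_ordered_group_omits_slope_order[OF U] by blast
    then show ?thesis
      using totally_ordered_group_slope_order comm_group_ZxZ finitely_generated_ZxZ by blast
  qed
  then show ?thesis
    unfolding totally_ordered_group_def by blast
qed

end
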